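(* Let $N\geq1$, $m\geq0$, $\varepsilon>0$, $R>0$, let $a\in C(\mathbb{R}^N)\cap L^\infty(\mathbb{R}^N)$, and let $J\in L^1(\mathbb{R}^N)$ be nonnegative; set $J_\varepsilon(z)=\varepsilon^{-N}J(z/\varepsilon)$ and, for $\varphi\in C(\overline{B_R})$, $$\mathcal{M}_{R,\varepsilon,m}[\varphi](x)=\frac{1}{\varepsilon^m}\left(\int_{B_R}J_\varepsilon(x-y)\varphi(y)\,\mathrm{d}y-\varphi(x)\right).$$ Let $v\in C(\overline{B_R})$ be positive and $u\in C(\overline{B_R})$ be nonnegative, and suppose that $\mathcal{M}_{R,\varepsilon,m}[u]+u(a-u)\geq0$ and $\mathcal{M}_{R,\varepsilon,m}[v]+v(a-v)\leq0$ in $\overline{B_R}$. Then $u\leq v$ in $\overline{B_R}$.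
   Context: $B_R$ is the open Euclidean ball of radius $R$ centred at the origin; $\overline{B_R}$ its closure. *)

theory Defs
  imports "HOL-Analysis.Analysis"
begin

definition kernel_scaled :: "real \<Rightarrow> ('a::euclidean_space \<Rightarrow> real) \<Rightarrow> 'a \<Rightarrow> real" where
  "kernel_scaled \<epsilon> J z = J (z /\<^sub>R \<epsilon>) / \<epsilon> ^ DIM('a)"

definition nonlocal_op ::
  "real \<Rightarrow> real \<Rightarrow> real \<Rightarrow> ('a::euclidean_space \<Rightarrow> real) \<Rightarrow> ('a \<Rightarrow> real) \<Rightarrow> 'a \<Rightarrow> real" where
  "nonlocal_op R \<epsilon> m J \<phi> x =
     ((LINT y:ball 0 R|lborel. kernel_scaled \<epsilon> J (x - y) * \<phi> y) - \<phi> x) / \<epsilon> powr m"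

end

theory Submission
  imports Defs
begin

text \<open>Let \<open>x\<^sub>0\<close> maximise \<open>u / v\<close> over the closed ball and put \<open>g = u x\<^sub>0 / v x\<^sub>0\<close>,
  so that \<open>u \<le> g v\<close> with equality at \<open>x\<^sub>0\<close>. Since the kernel is nonnegative, the nonlocal
  operator respects this contact: \<open>M[u](x\<^sub>0) \<le> g M[v](x\<^sub>0)\<close>. Subtracting the two differential
  inequalities at \<open>x\<^sub>0\<close> then leaves \<open>0 \<le> g v(x\<^sub>0)\<^sup>2 (1 - g)\<close>, so \<open>g \<le> 1\<close>.
  Everything happens at the single point \<open>x\<^sub>0\<close>.\<close>

lemma integrable_lborel_affine_comp:
  fixes f :: "'a::euclidean_space \<Rightarrow> real"
  assumes f: "integrable lborel f" and c: "c \<noteq> 0"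
  shows "integrable lborel (\<lambda>x. f (t + c *\<^sub>R x))"
proof -
  have [measurable]: "f \<in> borel_measurable borel"
    using f by auto
  have "integrable (density (distr lborel borel (\<lambda>x. t + c *\<^sub>R x)) (\<lambda>_. \<bar>c\<bar> ^ DIM('a))) f"
    using f lborel_affine[OF c, of t] by simp
  then have "integrable (distr lborel borel (\<lambda>x. t + c *\<^sub>R x)) (\<lambda>x. \<bar>c\<bar> ^ DIM('a) *\<^sub>R f x)"
    by (subst (asm) integrable_density) auto
  then have "integrable lborel (\<lambda>x. \<bar>c\<bar> ^ DIM('a) * f (t + c *\<^sub>R x))"
    using c by (subst (asm) integrable_distr_eq) auto
  then show ?thesis
    using c by simp
qed

lemma integrable_kernel_scaled_diff:
  fixes J :: "'a::euclidean_space \<Rightarrow> real"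
  assumes J: "integrable lborel J" and \<epsilon>: "\<epsilon> \<noteq> 0"
  shows "integrable lborel (\<lambda>y. kernel_scaled \<epsilon> J (x - y))"
proof -
  have "integrable lborel (\<lambda>y. J (x /\<^sub>R \<epsilon> + (- 1 / \<epsilon>) *\<^sub>R y))"
    by (rule integrable_lborel_affine_comp[OF J]) (use \<epsilon> in simp)
  moreover have "x /\<^sub>R \<epsilon> + (- 1 / \<epsilon>) *\<^sub>R y = (x - y) /\<^sub>R \<epsilon>" for y
    by (simp add: scaleR_diff_right divide_inverse_commute)
  ultimately show ?thesis
    unfolding kernel_scaled_def by simp
qed

lemma set_integrable_mult_continuous_compact:
  fixes K \<phi> :: "'a::euclidean_space \<Rightarrow> real"
  assumes K: "integrable lborel K" and S: "compact S" and \<phi>: "continuous_on S \<phi>"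
  shows "set_integrable lborel S (\<lambda>y. K y * \<phi> y)"
proof -
  obtain B where B: "\<And>y. y \<in> S \<Longrightarrow> \<bar>\<phi> y\<bar> \<le> B"
    using compact_imp_bounded[OF compact_continuous_image[OF \<phi> S]]
    unfolding bounded_iff by auto
  have [measurable]: "K \<in> borel_measurable borel"
    using K by auto
  have "(\<lambda>y. indicator S y *\<^sub>R \<phi> y) \<in> borel_measurable borel"
    using borel_measurable_continuous_on_indicator[OF _ \<phi>] S by (simp add: compact_imp_closed)
  then have "(\<lambda>y. K y * (indicator S y *\<^sub>R \<phi> y)) \<in> borel_measurable lborel"
    by measurable
  moreover have "\<bar>K y * (indicator S y *\<^sub>R \<phi> y)\<bar> \<le> \<bar>B * K y\<bar>" for y
    using mult_left_mono[OF B, of y "\<bar>K y\<bar>"] B[of y]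
    by (cases "y \<in> S") (auto simp: abs_mult mult.commute)
  ultimately have "integrable lborel (\<lambda>y. K y * (indicator S y *\<^sub>R \<phi> y))"
    by (intro Bochner_Integration.integrable_bound[OF integrable_mult_right[OF K, of B]]) auto
  then show ?thesis
    unfolding set_integrable_def by (simp add: mult.left_commute)
qed

lemma set_integrable_kernel_scaled_ball:
  fixes J \<phi> :: "'a::euclidean_space \<Rightarrow> real"
  assumes "integrable lborel J" and "\<epsilon> \<noteq> 0" and "continuous_on (cball 0 R) \<phi>"
  shows "set_integrable lborel (ball 0 R) (\<lambda>y. kernel_scaled \<epsilon> J (x - y) * \<phi> y)"
proof (rule set_integrable_subset)
  show "set_integrable lborel (cball 0 R) (\<lambda>y. kernel_scaled \<epsilon> J (x - y) * \<phi> y)"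
    using assms by (intro set_integrable_mult_continuous_compact integrable_kernel_scaled_diff) auto
qed auto

lemma nonlocal_op_le_at_contact:
  fixes J u v :: "'a::euclidean_space \<Rightarrow> real"
  assumes J: "integrable lborel J" "\<And>z. J z \<ge> 0" and \<epsilon>: "\<epsilon> > 0"
    and u: "continuous_on (cball 0 R) u" and v: "continuous_on (cball 0 R) v"
    and below: "\<And>y. y \<in> ball 0 R \<Longrightarrow> u y \<le> g * v y" and contact: "u x = g * v x"
  shows "nonlocal_op R \<epsilon> m J u x \<le> g * nonlocal_op R \<epsilon> m J v x"
proof -
  let ?K = "\<lambda>y. kernel_scaled \<epsilon> J (x - y)"
  have "?K y * u y \<le> g * (?K y * v y)" if "y \<in> ball 0 R" for y
  proof -
    have "?K y \<ge> 0"
      using J(2) \<epsilon> by (simp add: kernel_scaled_def)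
    then have "?K y * u y \<le> ?K y * (g * v y)"
      using below[OF that] by (rule mult_left_mono[rotated])
    then show ?thesis
      by (simp add: ac_simps)
  qed
  then have "(LINT y:ball 0 R|lborel. ?K y * u y) \<le> (LINT y:ball 0 R|lborel. g * (?K y * v y))"
    using set_integrable_kernel_scaled_ball[OF J(1)] \<epsilon> u v
    by (intro set_integral_mono) auto
  then have "(LINT y:ball 0 R|lborel. ?K y * u y) - u x
      \<le> g * ((LINT y:ball 0 R|lborel. ?K y * v y) - v x)"
    by (simp add: contact right_diff_distrib)
  then show ?thesis
    unfolding nonlocal_op_def using \<epsilon> by (simp add: divide_right_mono)
qed

lemma ratio_attains_max_on_compact:
  fixes u v :: "'a::topological_space \<Rightarrow> real"
  assumes S: "compact S" "S \<noteq> {}" and u: "continuous_on S u" and v: "continuous_on S v"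
    and v_pos: "\<And>x. x \<in> S \<Longrightarrow> v x > 0"
  obtains x\<^sub>0 where "x\<^sub>0 \<in> S" and "\<And>y. y \<in> S \<Longrightarrow> u y \<le> u x\<^sub>0 / v x\<^sub>0 * v y"
proof -
  have ratio_cont: "continuous_on S (\<lambda>x. u x / v x)"
    using u v v_pos by (intro continuous_intros) (auto, metis less_irrefl)
  obtain x\<^sub>0 where "x\<^sub>0 \<in> S" and max: "\<And>y. y \<in> S \<Longrightarrow> u y / v y \<le> u x\<^sub>0 / v x\<^sub>0"
    using continuous_attains_sup[OF S ratio_cont] by auto
  moreover have "u y \<le> u x\<^sub>0 / v x\<^sub>0 * v y" if "y \<in> S" for y
    using max[OF that] v_pos[OF that] by (simp add: pos_divide_le_eq)
  ultimately show ?thesis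
    using that by blast
qed

theorem lemma4p2:
  fixes a J u v :: "'a::euclidean_space \<Rightarrow> real" and m \<epsilon> R :: real
  assumes "m \<ge> 0" and "\<epsilon> > 0" and "R > 0"
    and "continuous_on UNIV a" and "bounded (range a)"
    and "integrable lborel J" and "\<And>z. J z \<ge> 0"
    and "continuous_on (cball 0 R) v" and "\<And>x. x \<in> cball 0 R \<Longrightarrow> v x > 0"
    and "continuous_on (cball 0 R) u" and "\<And>x. x \<in> cball 0 R \<Longrightarrow> u x \<ge> 0"
    and "\<And>x. x \<in> cball 0 R \<Longrightarrow> nonlocal_op R \<epsilon> m J u x + u x * (a x - u x) \<ge> 0"
    and "\<And>x. x \<in> cball 0 R \<Longrightarrow> nonlocal_op R \<epsilon> m J v x + v x * (a x - v x) \<le> 0"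
  shows "\<forall>x \<in> cball 0 R. u x \<le> v x"
proof -
  note v_pos = assms(9) and sub = assms(12) and super = assms(13)
  obtain x\<^sub>0 where x\<^sub>0: "x\<^sub>0 \<in> cball 0 R" and below: "\<And>y. y \<in> cball 0 R \<Longrightarrow> u y \<le> u x\<^sub>0 / v x\<^sub>0 * v y"
    using ratio_attains_max_on_compact[OF compact_cball _ assms(10,8) v_pos] assms(3) by auto
  define g where "g = u x\<^sub>0 / v x\<^sub>0"
  have contact: "u x\<^sub>0 = g * v x\<^sub>0"
    using v_pos[OF x\<^sub>0] by (simp add: g_def)
  have "g \<le> 1"
  proof (rule ccontr)
    assume "\<not> g \<le> 1"
    have "nonlocal_op R \<epsilon> m J u x\<^sub>0 \<le> g * nonlocal_op R \<epsilon> m J v x\<^sub>0"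
      using nonlocal_op_le_at_contact[OF assms(6,7,2,10,8) _ contact] below by (auto simp: g_def)
    also have "\<dots> \<le> - g * (v x\<^sub>0 * (a x\<^sub>0 - v x\<^sub>0))"
      using mult_left_mono[OF super[OF x\<^sub>0], of g] \<open>\<not> g \<le> 1\<close> by (simp add: algebra_simps)
    finally have "0 \<le> g * v x\<^sub>0 * (a x\<^sub>0 - g * v x\<^sub>0) - g * (v x\<^sub>0 * (a x\<^sub>0 - v x\<^sub>0))"
      using sub[OF x\<^sub>0] contact by simp
    also have "\<dots> = g * v x\<^sub>0 ^ 2 * (1 - g)"
      by (simp add: algebra_simps power2_eq_square)
    also have "\<dots> < 0"
      using \<open>\<not> g \<le> 1\<close> v_pos[OF x\<^sub>0] by (simp add: mult_pos_neg)
    finally show False by simp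
  qed
  show ?thesis
  proof
    fix x :: 'a
    assume x: "x \<in> cball 0 R"
    have "g * v x \<le> v x"
      using mult_right_mono[OF \<open>g \<le> 1\<close>, of "v x"] v_pos[OF x] by simp
    then show "u x \<le> v x"
      using below[OF x] by (simp add: g_def)
  qed
qed

end
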